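(* Let $\mathbf{k}$ be a perfect field and $L/\mathbf{k}$ a quadratic extension. Let $p=\{p_1,p_2,p_3\}$ and $q=\{q_1,q_2,q_3\}$ be points of degree $3$ in $\mathcal{Q}^L$ such that for any $h\in\operatorname{Gal}(\overline{\mathbf{k}}/\mathbf{k})$ there exists $\sigma\in\mathrm{Sym}_3$ with $p_i^h=p_{\sigma(i)}$ and $q_i^h=q_{\sigma(i)}$ for $i=1,2,3$. Suppose that the geometric components of $p$ (resp. of $q$) lie on pairwise distinct rulings of $\mathcal{Q}^L_L\simeq\mathbb{P}^1_L\times\mathbb{P}^1_L$. Then there exists $\alpha\in\operatorname{Aut}_{\mathbf{k}}(\mathcal{Q}^L)$ such that $\alpha(p_i)=q_i$ for $i=1,2,3$.
   Context: With $g$ the generator of $\operatorname{Gal}(L/\mathbf{k})$, $\mathcal{Q}^L$ is the $\mathbf{k}$-structure on $\mathbb{P}^1_L\times\mathbb{P}^1_L$ given by the Galois action $([u_0:u_1],[v_0:v_1])\mapsto([v_0^g:v_1^g],[u_0^g:u_1^g])$. A point of degree $3$ is a $\operatorname{Gal}(\overline{\mathbf{k}}/\mathbf{k})$-orbit $\{p_1,p_2,p_3\}$ of cardinality $3$ in $\mathcal{Q}^L(\overline{\mathbf{k}})$; "pairwise distinct rulings" means no two of the $p_i$ lie on a common fibre of either projection. *)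

theory Defs
  imports "HOL-Computational_Algebra.Polynomial"
begin

text \<open>The ambient type 'a plays the role of an algebraic closure of the base field k,
  which is modelled as a subfield (a subset of the carrier of 'a).\<close>

definition alg_closed_type :: "'a::field itself \<Rightarrow> bool" where
  "alg_closed_type _ \<longleftrightarrow> (\<forall>f::'a poly. degree f > 0 \<longrightarrow> (\<exists>x. poly f x = 0))"

definition is_subfield :: "'a::field set \<Rightarrow> bool" where
  "is_subfield k \<longleftrightarrow> 0 \<in> k \<and> 1 \<in> k \<and> (\<forall>x\<in>k. \<forall>y\<in>k. x + y \<in> k \<and> x - y \<in> k \<and> x * y \<in> k)
     \<and> (\<forall>x\<in>k. x \<noteq> 0 \<longrightarrow> inverse x \<in> k)"

definition algebraic_over :: "'a::field set \<Rightarrow> 'a \<Rightarrow> bool" where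
  "algebraic_over k x \<longleftrightarrow> (\<exists>f. f \<noteq> 0 \<and> (\<forall>i. coeff f i \<in> k) \<and> poly f x = 0)"

definition perfect_subfield :: "'a::field set \<Rightarrow> bool" where
  "perfect_subfield k \<longleftrightarrow> is_subfield k \<and>
     (CHAR('a) = 0 \<or> (\<forall>x\<in>k. \<exists>y\<in>k. y ^ CHAR('a) = x))"

definition quadratic_ext :: "'a::field set \<Rightarrow> 'a set \<Rightarrow> bool" where
  "quadratic_ext k L \<longleftrightarrow> is_subfield L \<and> k \<subseteq> L \<and>
     (\<exists>b1\<in>L. \<exists>b2\<in>L.
        (\<forall>x\<in>k. \<forall>y\<in>k. x * b1 + y * b2 = 0 \<longrightarrow> x = 0 \<and> y = 0) \<and>
        (\<forall>z\<in>L. \<exists>x\<in>k. \<exists>y\<in>k. z = x * b1 + y * b2))"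

definition Gal :: "'a::field set \<Rightarrow> ('a \<Rightarrow> 'a) set" where
  "Gal k = {h. bij h \<and> h 0 = 0 \<and> h 1 = 1 \<and> (\<forall>x y. h (x + y) = h x + h y) \<and>
               (\<forall>x y. h (x * y) = h x * h y) \<and> (\<forall>x\<in>k. h x = x)}"

definition proj_pt :: "'a::field \<times> 'a \<Rightarrow> ('a \<times> 'a) set" where
  "proj_pt u = {(c * fst u, c * snd u) | c. c \<noteq> 0}"

definition P1 :: "('a::field \<times> 'a) set set" where
  "P1 = {proj_pt u | u. u \<noteq> (0, 0)}"

type_synonym 'a qpt = "('a \<times> 'a) set \<times> ('a \<times> 'a) set"

definition QL_points :: "'a::field qpt set" where
  "QL_points = P1 \<times> P1"

definition conj_P1 :: "('a::field \<Rightarrow> 'a) \<Rightarrow> ('a \<times> 'a) set \<Rightarrow> ('a \<times> 'a) set" where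
  "conj_P1 h P = (\<lambda>(x, y). (h x, h y)) ` P"

text \<open>Galois action defining the k-structure Q^L: elements of Gal(kbar/k) restricting
  to the identity of L act coordinatewise; those restricting to the generator g of
  Gal(L/k) act by ([u],[v]) maps to ([v^h],[u^h]).\<close>
definition gal_act :: "'a::field set \<Rightarrow> ('a \<Rightarrow> 'a) \<Rightarrow> 'a qpt \<Rightarrow> 'a qpt" where
  "gal_act L h pt = (if (\<forall>x\<in>L. h x = x)
       then (conj_P1 h (fst pt), conj_P1 h (snd pt))
       else (conj_P1 h (snd pt), conj_P1 h (fst pt)))"

text \<open>A point of degree 3 of Q^L, given by an enumeration p 1, p 2, p 3 of its geometric
  components: three distinct kbar-points forming one Galois orbit.\<close>
definition deg3_point :: "'a::field set \<Rightarrow> 'a set \<Rightarrow> (nat \<Rightarrow> 'a qpt) \<Rightarrow> bool" where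
  "deg3_point k L p \<longleftrightarrow> p ` {1,2,3} \<subseteq> QL_points \<and> inj_on p {1,2,3} \<and>
     (\<lambda>h. gal_act L h (p 1)) ` Gal k = p ` {1,2,3}"

definition distinct_rulings :: "(nat \<Rightarrow> 'a qpt) \<Rightarrow> bool" where
  "distinct_rulings p \<longleftrightarrow> (\<forall>i\<in>{1,2,3}. \<forall>j\<in>{1,2,3}. i \<noteq> j \<longrightarrow>
      fst (p i) \<noteq> fst (p j) \<and> snd (p i) \<noteq> snd (p j))"

definition mat_P1 :: "'a::field \<times> 'a \<times> 'a \<times> 'a \<Rightarrow> ('a \<times> 'a) set \<Rightarrow> ('a \<times> 'a) set" where
  "mat_P1 M P = (case M of (a, b, c, d) \<Rightarrow> (\<lambda>(x, y). (a * x + b * y, c * x + d * y)) ` P)"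

definition invertible2 :: "'a::field \<times> 'a \<times> 'a \<times> 'a \<Rightarrow> bool" where
  "invertible2 M = (case M of (a, b, c, d) \<Rightarrow> a * d - b * c \<noteq> 0)"

text \<open>Aut_kbar(P1 x P1) = (PGL2 x PGL2) semidirect Z/2: maps
  ([u],[v]) to ([A u],[B v]) or to ([A v],[B u]).\<close>
definition Aut_kbar :: "('a::field qpt \<Rightarrow> 'a qpt) set" where
  "Aut_kbar = {\<alpha>. \<exists>A B s. invertible2 A \<and> invertible2 B \<and>
      (\<forall>pt\<in>QL_points. \<alpha> pt = (if s then (mat_P1 A (snd pt), mat_P1 B (fst pt))
                                    else (mat_P1 A (fst pt), mat_P1 B (snd pt))))}"

text \<open>Aut_k(Q^L): kbar-automorphisms that are defined over k, i.e. commute with the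
  Galois action defining the k-structure (Galois descent, k perfect).\<close>
definition Aut_QL :: "'a::field set \<Rightarrow> 'a set \<Rightarrow> ('a qpt \<Rightarrow> 'a qpt) set" where
  "Aut_QL k L = {\<alpha> \<in> Aut_kbar. \<forall>h\<in>Gal k. \<forall>pt\<in>QL_points.
       \<alpha> (gal_act L h pt) = gal_act L h (\<alpha> pt)}"

end

theory Submission
  imports Defs
begin

(* PGL_2 acts simply transitively on triples of distinct points of P^1: every such triple is the
   image of the standard frame [1:0], [0:1], [1:1] under a unique projectivity. Hence there are
   projectivities A and B carrying the first, resp. second, projections of p_1, p_2, p_3 to those of
   q_1, q_2, q_3, and alpha = A x B sends p_i to q_i. It is defined over k: conjugating a factor of
   alpha by a Galois element h gives a projectivity that again carries the projections of p to those
   of q, up to the permutation induced by h (and with the two factors exchanged when h is nontrivial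
   on L); by uniqueness it is the corresponding factor of alpha. *)

(* (a, b, c, d) stands for the matrix [[a, b], [c, d]], as in mat_P1. *)
type_synonym 'a mat2 = "'a \<times> 'a \<times> 'a \<times> 'a"

definition mat2_mult :: "'a::field mat2 \<Rightarrow> 'a mat2 \<Rightarrow> 'a mat2" where
  "mat2_mult M N = (case M of (a, b, c, d) \<Rightarrow> case N of (a', b', c', d') \<Rightarrow>
     (a * a' + b * c', a * b' + b * d', c * a' + d * c', c * b' + d * d'))"

definition mat2_inv :: "'a::field mat2 \<Rightarrow> 'a mat2" where
  "mat2_inv M = (case M of (a, b, c, d) \<Rightarrow>
     let D = a * d - b * c in (d / D, - b / D, - c / D, a / D))"

definition det2 :: "'a::field mat2 \<Rightarrow> 'a" where
  "det2 M = (case M of (a, b, c, d) \<Rightarrow> a * d - b * c)"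

definition mat2_map :: "('a \<Rightarrow> 'a) \<Rightarrow> 'a mat2 \<Rightarrow> 'a mat2" where
  "mat2_map h M = (case M of (a, b, c, d) \<Rightarrow> (h a, h b, h c, h d))"

lemma mat_P1_mat2_mult: "mat_P1 M (mat_P1 N X) = mat_P1 (mat2_mult M N) X"
  by (cases M; cases N) (auto simp: mat_P1_def mat2_mult_def image_image algebra_simps case_prod_beta)

lemma mat_P1_one: "mat_P1 (1, 0, 0, 1) X = X"
  by (auto simp: mat_P1_def case_prod_beta)

lemma mat2_mult_inv:
  assumes "invertible2 N"
  shows "mat2_mult (mat2_inv N) N = (1, 0, 0, 1)" "mat2_mult N (mat2_inv N) = (1, 0, 0, 1)"
proof -
  obtain a b c d where N: "N = (a, b, c, d)" by (cases N)
  define D where "D = a * d - b * c"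
  have "D \<noteq> 0" using assms N by (simp add: D_def invertible2_def)
  then have "d / D * a + - b / D * c = 1" "a * (d / D) + b * (- c / D) = 1"
    "- c / D * b + a / D * d = 1" "c * (- b / D) + d * (a / D) = 1"
    by (simp_all add: field_simps) (simp_all add: D_def algebra_simps)
  then show "mat2_mult (mat2_inv N) N = (1, 0, 0, 1)" "mat2_mult N (mat2_inv N) = (1, 0, 0, 1)"
    by (simp_all add: N mat2_mult_def mat2_inv_def D_def[symmetric] algebra_simps)
qed

lemma mat_P1_inv_cancel:
  assumes "invertible2 N"
  shows "mat_P1 (mat2_inv N) (mat_P1 N X) = X" "mat_P1 N (mat_P1 (mat2_inv N) X) = X"
  using mat2_mult_inv[OF assms] by (simp_all add: mat_P1_mat2_mult mat_P1_one)

lemma invertible2_iff_det2: "invertible2 M \<longleftrightarrow> det2 M \<noteq> 0"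
  by (cases M) (simp add: invertible2_def det2_def)

lemma det2_mat2_mult: "det2 (mat2_mult M N) = det2 M * det2 N"
  by (cases M; cases N) (simp add: det2_def mat2_mult_def algebra_simps)

lemma invertible2_mat2_mult: "invertible2 M \<Longrightarrow> invertible2 N \<Longrightarrow> invertible2 (mat2_mult M N)"
  by (simp add: invertible2_iff_det2 det2_mat2_mult)

lemma invertible2_mat2_inv:
  assumes "invertible2 N"
  shows "invertible2 (mat2_inv N)"
proof -
  have "det2 (mat2_inv N) * det2 N = 1"
    using mat2_mult_inv(1)[OF assms] det2_mat2_mult[of "mat2_inv N" N] by (simp add: det2_def)
  then show ?thesis by (auto simp: invertible2_iff_det2)
qed

lemma proj_pt_scale: "(c::'a::field) \<noteq> 0 \<Longrightarrow> proj_pt (c * x, c * y) = proj_pt (x, y)"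
proof (intro set_eqI iffI)
  fix z
  assume "z \<in> proj_pt (c * x, c * y)" "c \<noteq> 0"
  then obtain e where "e \<noteq> 0" "z = ((e * c) * x, (e * c) * y)" by (auto simp: proj_pt_def)
  with \<open>c \<noteq> 0\<close> show "z \<in> proj_pt (x, y)" unfolding proj_pt_def by auto
next
  fix z
  assume "z \<in> proj_pt (x, y)" "c \<noteq> 0"
  then obtain e where "e / c \<noteq> 0" "z = ((e / c) * (c * x), (e / c) * (c * y))"
    by (auto simp: proj_pt_def)
  then show "z \<in> proj_pt (c * x, c * y)" unfolding proj_pt_def fst_conv snd_conv by blast
qed

lemma proj_pt_eqD:
  assumes "proj_pt (x, y) = proj_pt (x', y')"
  shows "\<exists>c. c \<noteq> 0 \<and> x' = c * x \<and> y' = c * y"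
proof -
  have "(x', y') \<in> proj_pt (x', y')" unfolding proj_pt_def by force
  then have "(x', y') \<in> proj_pt (x, y)" using assms by simp
  then show ?thesis by (auto simp: proj_pt_def)
qed

lemma P1_cases:
  assumes "X \<in> P1"
  obtains x y where "X = proj_pt (x, y)" "(x, y) \<noteq> (0, 0)"
  using assms by (auto simp: P1_def)

lemma mat_P1_proj_pt: "mat_P1 (a, b, c, d) (proj_pt (x, y)) = proj_pt (a * x + b * y, c * x + d * y)"
  unfolding mat_P1_def proj_pt_def by (force simp: algebra_simps)

lemma mat2_kernel_trivial:
  fixes a b c d x y :: "'a::field"
  assumes "a * x + b * y = 0" "c * x + d * y = 0" "a * d - b * c \<noteq> 0"
  shows "x = 0 \<and> y = 0"
proof -
  have "(a * d - b * c) * x = d * (a * x + b * y) - b * (c * x + d * y)"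
    and "(a * d - b * c) * y = a * (c * x + d * y) - c * (a * x + b * y)"
    by (simp_all add: algebra_simps)
  then show ?thesis using assms by simp
qed

lemma mat_P1_in_P1:
  assumes "invertible2 M" "X \<in> P1"
  shows "mat_P1 M X \<in> P1"
proof -
  obtain a b c d where M: "M = (a, b, c, d)" by (cases M)
  obtain x y where X: "X = proj_pt (x, y)" "(x, y) \<noteq> (0, 0)" using assms(2) by (rule P1_cases)
  have "(a * x + b * y, c * x + d * y) \<noteq> (0, 0)"
    using mat2_kernel_trivial[of a x b y c d] assms(1) X(2) M by (auto simp: invertible2_def)
  then show ?thesis using M X by (auto simp: mat_P1_proj_pt P1_def)
qed

lemma proj_pt_neq_det_nonzero:
  fixes x y x' y' :: "'a::field"
  assumes "proj_pt (x, y) \<noteq> proj_pt (x', y')" "(x, y) \<noteq> (0, 0)" "(x', y') \<noteq> (0, 0)"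
  shows "x * y' - y * x' \<noteq> 0"
proof
  assume det: "x * y' - y * x' = 0"
  have "(x', y') = (x' / x * x, x' / x * y)" if "x \<noteq> 0"
    using that det by (auto simp: field_simps)
  moreover have "(x', y') = (y' / y * x, y' / y * y)" if "x = 0"
    using that det assms(2) by auto
  ultimately obtain c where c: "(x', y') = (c * x, c * y)" by blast
  then have "c \<noteq> 0" using assms by auto
  then show False using assms(1) c proj_pt_scale by metis
qed

lemma P1_frame_exists:
  assumes "P ` {1, 2, 3} \<subseteq> P1" "inj_on P {1, 2, 3::nat}"
  obtains F :: "'a::field mat2" where "invertible2 F"
    "mat_P1 F (proj_pt (1, 0)) = P 1" "mat_P1 F (proj_pt (0, 1)) = P 2"
    "mat_P1 F (proj_pt (1, 1)) = P 3"
proof -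
  have distinct: "P 1 \<noteq> P 2" "P 1 \<noteq> P 3" "P 2 \<noteq> P 3"
    using assms(2) unfolding inj_on_def by auto
  have "P 1 \<in> P1" "P 2 \<in> P1" "P 3 \<in> P1" using assms(1) by auto
  obtain a0 a1 where a: "P 1 = proj_pt (a0, a1)" "(a0, a1) \<noteq> (0, 0)"
    using \<open>P 1 \<in> P1\<close> by (rule P1_cases)
  obtain b0 b1 where b: "P 2 = proj_pt (b0, b1)" "(b0, b1) \<noteq> (0, 0)"
    using \<open>P 2 \<in> P1\<close> by (rule P1_cases)
  obtain c0 c1 where c: "P 3 = proj_pt (c0, c1)" "(c0, c1) \<noteq> (0, 0)"
    using \<open>P 3 \<in> P1\<close> by (rule P1_cases)
  define D where "D = a0 * b1 - a1 * b0"
  \<comment> \<open>Cramer's rule for \<open>l a + m b = c\<close>, so that \<open>F = (l a | m b)\<close> sends [1:0], [0:1], [1:1]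
    to \<open>P 1\<close>, \<open>P 2\<close>, \<open>P 3\<close>.\<close>
  define l where "l = (c0 * b1 - c1 * b0) / D"
  define m where "m = (a0 * c1 - a1 * c0) / D"
  have "D \<noteq> 0" "a0 * c1 - a1 * c0 \<noteq> 0" "b0 * c1 - b1 * c0 \<noteq> 0"
    using proj_pt_neq_det_nonzero a b c distinct unfolding D_def by metis+
  then have "l \<noteq> 0" "m \<noteq> 0" and Dlm: "D * l = c0 * b1 - c1 * b0" "D * m = a0 * c1 - a1 * c0"
    unfolding l_def m_def by (auto simp: field_simps)
  have "D * (l * a0 + m * b0) = D * c0" "D * (l * a1 + m * b1) = D * c1"
    by (simp_all add: distrib_left mult.assoc[symmetric] Dlm) (simp_all add: D_def algebra_simps)
  then have lm: "l * a0 + m * b0 = c0" "l * a1 + m * b1 = c1" using \<open>D \<noteq> 0\<close> by simp_all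
  define F where "F = (l * a0, m * b0, l * a1, m * b1)"
  have "det2 F = l * m * D" by (simp add: F_def det2_def D_def algebra_simps)
  then have "invertible2 F"
    using \<open>l \<noteq> 0\<close> \<open>m \<noteq> 0\<close> \<open>D \<noteq> 0\<close> by (simp add: invertible2_iff_det2)
  moreover have "mat_P1 F (proj_pt (1, 0)) = P 1" "mat_P1 F (proj_pt (0, 1)) = P 2"
    using a b \<open>l \<noteq> 0\<close> \<open>m \<noteq> 0\<close> by (simp_all add: F_def mat_P1_proj_pt proj_pt_scale)
  moreover have "mat_P1 F (proj_pt (1, 1)) = P 3"
    using c lm by (simp add: F_def mat_P1_proj_pt)
  ultimately show ?thesis by (rule that)
qed

lemma mat_P1_fixing_frame_is_id:
  assumes "mat_P1 K (proj_pt (1, 0)) = proj_pt (1, 0)" "mat_P1 K (proj_pt (0, 1)) = proj_pt (0, 1)"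
    "mat_P1 K (proj_pt (1, 1)) = proj_pt (1, 1)" and "Y \<in> P1"
  shows "mat_P1 K Y = Y"
proof -
  obtain a b c d where K: "K = (a, b, c, d)" by (cases K)
  have "proj_pt (1, 0) = proj_pt (a, c)" "proj_pt (0, 1) = proj_pt (b, d)"
    "proj_pt (1, 1) = proj_pt (a + b, c + d)"
    using assms(1-3) by (simp_all add: K mat_P1_proj_pt)
  then obtain s where "s \<noteq> 0" "K = (s, 0, 0, s)"
    using K by (fastforce dest!: proj_pt_eqD)
  moreover obtain y0 y1 where "Y = proj_pt (y0, y1)" using assms(4) by (rule P1_cases)
  ultimately show ?thesis by (simp add: mat_P1_proj_pt proj_pt_scale)
qed

lemma mat_P1_three_points_unique:
  assumes "invertible2 M" "invertible2 N"
    and "P ` {1, 2, 3} \<subseteq> P1" "inj_on P {1, 2, 3}"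
    and "\<forall>j\<in>{1, 2, 3::nat}. mat_P1 M (P j) = mat_P1 N (P j)"
    and "Y \<in> P1"
  shows "mat_P1 M Y = mat_P1 N Y"
proof -
  obtain F where F: "invertible2 F" "mat_P1 F (proj_pt (1, 0)) = P 1"
    "mat_P1 F (proj_pt (0, 1)) = P 2" "mat_P1 F (proj_pt (1, 1)) = P 3"
    using P1_frame_exists assms(3,4) by blast
  \<comment> \<open>\<open>K = F\<^sup>-\<^sup>1 N\<^sup>-\<^sup>1 M F\<close> fixes the standard frame, hence acts trivially on P1.\<close>
  define K where "K = mat2_mult (mat2_inv F) (mat2_mult (mat2_inv N) (mat2_mult M F))"
  have K: "mat_P1 K Z = mat_P1 (mat2_inv F) (mat_P1 (mat2_inv N) (mat_P1 M (mat_P1 F Z)))" for Z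
    by (simp add: K_def mat_P1_mat2_mult)
  have fixed: "mat_P1 K Z = Z" if "j \<in> {1, 2, 3}" "mat_P1 F Z = P j" for Z j
  proof -
    have "mat_P1 K Z = mat_P1 (mat2_inv F) (mat_P1 (mat2_inv N) (mat_P1 N (P j)))"
      using K that(2) assms(5) that(1) by metis
    also have "\<dots> = mat_P1 (mat2_inv F) (mat_P1 F Z)"
      using mat_P1_inv_cancel(1)[OF assms(2)] that(2) by simp
    also have "\<dots> = Z" using mat_P1_inv_cancel(1)[OF F(1)] .
    finally show ?thesis .
  qed
  have "mat_P1 K W = W" if "W \<in> P1" for W
    using mat_P1_fixing_frame_is_id[OF fixed[OF _ F(2)] fixed[OF _ F(3)] fixed[OF _ F(4)] that]
    by simp
  moreover have "mat_P1 (mat2_inv F) Y \<in> P1"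
    using mat_P1_in_P1 invertible2_mat2_inv F(1) assms(6) by blast
  ultimately have "mat_P1 (mat2_inv F) (mat_P1 (mat2_inv N) (mat_P1 M Y)) = mat_P1 (mat2_inv F) Y"
    by (metis K mat_P1_inv_cancel(2) F(1))
  then show ?thesis
    by (metis mat_P1_inv_cancel(2) F(1) assms(2))
qed

lemma mat_P1_three_points_exists:
  assumes "P ` {1, 2, 3} \<subseteq> P1" "inj_on P {1, 2, 3}" "Q ` {1, 2, 3} \<subseteq> P1" "inj_on Q {1, 2, 3}"
  obtains M where "invertible2 M" "\<forall>j\<in>{1, 2, 3::nat}. mat_P1 M (P j) = Q j"
proof -
  obtain F where F: "invertible2 F" "mat_P1 F (proj_pt (1, 0)) = P 1"
    "mat_P1 F (proj_pt (0, 1)) = P 2" "mat_P1 F (proj_pt (1, 1)) = P 3"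
    using P1_frame_exists assms(1,2) by blast
  obtain G where G: "invertible2 G" "mat_P1 G (proj_pt (1, 0)) = Q 1"
    "mat_P1 G (proj_pt (0, 1)) = Q 2" "mat_P1 G (proj_pt (1, 1)) = Q 3"
    using P1_frame_exists assms(3,4) by blast
  have "mat_P1 (mat2_mult G (mat2_inv F)) (mat_P1 F Z) = mat_P1 G Z" for Z
    by (simp add: mat_P1_mat2_mult[symmetric] mat_P1_inv_cancel F(1))
  then show ?thesis
    using that[of "mat2_mult G (mat2_inv F)"] F G
    by (simp add: invertible2_mat2_mult invertible2_mat2_inv) (metis (full_types))
qed

lemma GalD:
  assumes "h \<in> Gal k"
  shows "bij h" "h 0 = 0" "h (x + y) = h x + h y" "h (x * y) = h x * h y"
  using assms by (auto simp: Gal_def)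

lemma Gal_diff: "h \<in> Gal k \<Longrightarrow> h (x - y) = h x - h (y::'a::field)"
  using GalD(3)[of h k "x - y" y] by (simp add: algebra_simps)

lemma Gal_nonzero: "h \<in> Gal k \<Longrightarrow> x \<noteq> 0 \<Longrightarrow> h x \<noteq> (0::'a::field)"
  using GalD(1,2) by (metis bij_pointE)

lemma conj_P1_proj_pt:
  assumes h: "h \<in> Gal k"
  shows "conj_P1 h (proj_pt (x, y)) = proj_pt (h x, h (y::'a::field))"
proof (intro set_eqI iffI)
  fix z
  assume "z \<in> conj_P1 h (proj_pt (x, y))"
  then obtain c where "c \<noteq> 0" "z = (h (c * x), h (c * y))" by (auto simp: conj_P1_def proj_pt_def)
  then have "h c \<noteq> 0" "z = (h c * h x, h c * h y)" using GalD(4)[OF h] Gal_nonzero[OF h] by auto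
  then show "z \<in> proj_pt (h x, h y)" unfolding proj_pt_def by auto
next
  fix z
  assume "z \<in> proj_pt (h x, h y)"
  then obtain c where c: "c \<noteq> 0" "z = (c * h x, c * h y)" by (auto simp: proj_pt_def)
  obtain c' where "c = h c'" using GalD(1)[OF h] by (metis bij_pointE)
  with c have "c' \<noteq> 0" "z = (h (c' * x), h (c' * y))" using GalD(2,4)[OF h] by auto
  then show "z \<in> conj_P1 h (proj_pt (x, y))" unfolding conj_P1_def proj_pt_def by force
qed

lemma conj_P1_in_P1:
  assumes h: "h \<in> Gal k" and "X \<in> P1"
  shows "conj_P1 h X \<in> (P1 :: ('a::field \<times> 'a) set set)"
proof -
  obtain x y where "X = proj_pt (x, y)" "(x, y) \<noteq> (0, 0)" using assms(2) by (rule P1_cases)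
  moreover have "(h x, h y) \<noteq> (0, 0)" using calculation(2) Gal_nonzero[OF h] by auto
  ultimately show ?thesis by (auto simp: conj_P1_proj_pt[OF h] P1_def)
qed

lemma conj_P1_mat_P1:
  assumes h: "h \<in> Gal k"
  shows "conj_P1 h (mat_P1 M X) = mat_P1 (mat2_map h M) (conj_P1 h (X::('a::field \<times> 'a) set))"
  by (cases M) (simp add: conj_P1_def mat_P1_def mat2_map_def image_image case_prod_beta GalD(3,4)[OF h])

lemma invertible2_mat2_map:
  assumes h: "h \<in> Gal k" and "invertible2 M"
  shows "invertible2 (mat2_map h (M::'a::field mat2))"
proof (cases M)
  case (fields a b c d)
  have "h (a * d - b * c) \<noteq> 0" using assms fields Gal_nonzero[OF h] by (simp add: invertible2_def)
  then show ?thesis using fields by (simp add: mat2_map_def invertible2_def Gal_diff[OF h] GalD(4)[OF h])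
qed

lemma mat_P1_conj_P1_intertwine:
  assumes h: "h \<in> Gal k" and M: "invertible2 M" and N: "invertible2 N"
    and P: "P ` {1, 2, 3} \<subseteq> P1" "inj_on P {1, 2, 3::nat}"
    and \<sigma>: "bij_betw \<sigma> {1, 2, 3::nat} {1, 2, 3}"
    and conj: "\<forall>i\<in>{1, 2, 3}. conj_P1 h (P' i) = P (\<sigma> i) \<and>
      conj_P1 h (mat_P1 N (P' i)) = mat_P1 M (P (\<sigma> i))"
    and X: "X \<in> P1"
  shows "mat_P1 M (conj_P1 h X) = conj_P1 h (mat_P1 N (X::('a::field \<times> 'a) set))"
proof -
  have "mat_P1 M (P j) = mat_P1 (mat2_map h N) (P j)" if j: "j \<in> {1, 2, 3}" for j
  proof -
    obtain i where i: "i \<in> {1, 2, 3}" "\<sigma> i = j"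
      using \<sigma> j unfolding bij_betw_def by (metis imageE)
    then show ?thesis using conj conj_P1_mat_P1[OF h] by metis
  qed
  then have "mat_P1 M (conj_P1 h X) = mat_P1 (mat2_map h N) (conj_P1 h X)"
    using mat_P1_three_points_unique[OF M invertible2_mat2_map[OF h N] P] conj_P1_in_P1[OF h X]
    by blast
  then show ?thesis using conj_P1_mat_P1[OF h] by simp
qed

lemma distinct_rulings_inj_on:
  assumes "distinct_rulings p"
  shows "inj_on (\<lambda>i. fst (p i)) {1, 2, 3}" "inj_on (\<lambda>i. snd (p i)) {1, 2, 3}"
  using assms unfolding distinct_rulings_def inj_on_def by blast+

lemma deg3_point_rulings_in_P1:
  assumes "deg3_point k L p"
  shows "(\<lambda>i. fst (p i)) ` {1, 2, 3} \<subseteq> P1" "(\<lambda>i. snd (p i)) ` {1, 2, 3} \<subseteq> P1"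
  using assms by (auto simp: deg3_point_def QL_points_def)

lemma map_prod_mat_P1_in_Aut_kbar:
  "invertible2 A \<Longrightarrow> invertible2 B \<Longrightarrow> map_prod (mat_P1 A) (mat_P1 B) \<in> Aut_kbar"
  unfolding Aut_kbar_def
  by (intro CollectI exI[of _ A] exI[of _ B] exI[of _ False]) (simp add: map_prod_def case_prod_beta)

lemma map_prod_mat_P1_gal_act_commute:
  assumes h: "h \<in> Gal k" and A: "invertible2 A" and B: "invertible2 B"
    and p: "(\<lambda>i. fst (p i)) ` {1, 2, 3} \<subseteq> P1" "(\<lambda>i. snd (p i)) ` {1, 2, 3} \<subseteq> P1"
      "distinct_rulings p"
    and AB: "\<forall>j\<in>{1, 2, 3::nat}. mat_P1 A (fst (p j)) = fst (q j) \<and> mat_P1 B (snd (p j)) = snd (q j)"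
    and \<sigma>: "bij_betw \<sigma> {1, 2, 3} {1, 2, 3}"
    and pq: "\<forall>i\<in>{1, 2, 3}. gal_act L h (p i) = p (\<sigma> i) \<and> gal_act L h (q i) = q (\<sigma> i)"
    and pt: "pt \<in> QL_points"
  shows "map_prod (mat_P1 A) (mat_P1 B) (gal_act L h pt) =
    gal_act L h (map_prod (mat_P1 A) (mat_P1 B) pt)"
proof -
  note inj = distinct_rulings_inj_on[OF p(3)]
  have AB\<sigma>: "\<forall>i\<in>{1, 2, 3}. mat_P1 A (fst (p (\<sigma> i))) = fst (q (\<sigma> i)) \<and>
      mat_P1 B (snd (p (\<sigma> i))) = snd (q (\<sigma> i))"
    using AB bij_betwE[OF \<sigma>] by blast
  have "fst pt \<in> P1" "snd pt \<in> P1" using pt by (auto simp: QL_points_def)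
  show ?thesis
  proof (cases "\<forall>x\<in>L. h x = x")
    case True
    then have g: "gal_act L h z = (conj_P1 h (fst z), conj_P1 h (snd z))" for z
      by (simp add: gal_act_def)
    have c: "\<forall>i\<in>{1, 2, 3}.
        conj_P1 h (fst (p i)) = fst (p (\<sigma> i)) \<and> conj_P1 h (fst (q i)) = fst (q (\<sigma> i)) \<and>
        conj_P1 h (snd (p i)) = snd (p (\<sigma> i)) \<and> conj_P1 h (snd (q i)) = snd (q (\<sigma> i))"
      using pq unfolding g prod_eq_iff fst_conv snd_conv by blast
    have "mat_P1 A (conj_P1 h (fst pt)) = conj_P1 h (mat_P1 A (fst pt))"
      using c AB AB\<sigma>
      by (intro mat_P1_conj_P1_intertwine[where P' = "\<lambda>i. fst (p i)",
            OF h A A p(1) inj(1) \<sigma> _ \<open>fst pt \<in> P1\<close>]) simp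
    moreover have "mat_P1 B (conj_P1 h (snd pt)) = conj_P1 h (mat_P1 B (snd pt))"
      using c AB AB\<sigma>
      by (intro mat_P1_conj_P1_intertwine[where P' = "\<lambda>i. snd (p i)",
            OF h B B p(2) inj(2) \<sigma> _ \<open>snd pt \<in> P1\<close>]) simp
    ultimately show ?thesis by (simp add: g map_prod_def case_prod_beta)
  next
    case False
    have g: "gal_act L h z = (conj_P1 h (snd z), conj_P1 h (fst z))" for z
      using False by (auto simp: gal_act_def)
    have c: "\<forall>i\<in>{1, 2, 3}.
        conj_P1 h (snd (p i)) = fst (p (\<sigma> i)) \<and> conj_P1 h (snd (q i)) = fst (q (\<sigma> i)) \<and>
        conj_P1 h (fst (p i)) = snd (p (\<sigma> i)) \<and> conj_P1 h (fst (q i)) = snd (q (\<sigma> i))"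
      using pq unfolding g prod_eq_iff fst_conv snd_conv by blast
    have "mat_P1 A (conj_P1 h (snd pt)) = conj_P1 h (mat_P1 B (snd pt))"
      using c AB AB\<sigma>
      by (intro mat_P1_conj_P1_intertwine[where P' = "\<lambda>i. snd (p i)",
            OF h A B p(1) inj(1) \<sigma> _ \<open>snd pt \<in> P1\<close>]) simp
    moreover have "mat_P1 B (conj_P1 h (fst pt)) = conj_P1 h (mat_P1 A (fst pt))"
      using c AB AB\<sigma>
      by (intro mat_P1_conj_P1_intertwine[where P' = "\<lambda>i. fst (p i)",
            OF h B A p(2) inj(2) \<sigma> _ \<open>fst pt \<in> P1\<close>]) simp
    ultimately show ?thesis by (simp add: g map_prod_def case_prod_beta)
  qed
qed

theorem lemma3p7:
  fixes k L :: "'a::field set" and p q :: "nat \<Rightarrow> 'a qpt"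
  assumes "alg_closed_type TYPE('a)"
    and "perfect_subfield k"
    and "\<forall>x. algebraic_over k x"
    and "quadratic_ext k L"
    and "deg3_point k L p" and "deg3_point k L q"
    and "\<forall>h\<in>Gal k. \<exists>\<sigma>. bij_betw \<sigma> {1,2,3} {1,2,3} \<and>
           (\<forall>i\<in>{1,2,3}. gal_act L h (p i) = p (\<sigma> i) \<and> gal_act L h (q i) = q (\<sigma> i))"
    and "distinct_rulings p" and "distinct_rulings q"
  shows "\<exists>\<alpha>\<in>Aut_QL k L. \<forall>i\<in>{1,2,3::nat}. \<alpha> (p i) = q i"
proof -
  \<comment> \<open>The argument only uses that elements of \<open>Gal k\<close> are field automorphisms.\<close>
  note p = deg3_point_rulings_in_P1[OF assms(5)] distinct_rulings_inj_on[OF assms(8)]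
  note q = deg3_point_rulings_in_P1[OF assms(6)] distinct_rulings_inj_on[OF assms(9)]
  obtain A where A: "invertible2 A" "\<forall>j\<in>{1, 2, 3::nat}. mat_P1 A (fst (p j)) = fst (q j)"
    using mat_P1_three_points_exists[OF p(1,3) q(1,3)] .
  obtain B where B: "invertible2 B" "\<forall>j\<in>{1, 2, 3::nat}. mat_P1 B (snd (p j)) = snd (q j)"
    using mat_P1_three_points_exists[OF p(2,4) q(2,4)] .
  define \<alpha> where "\<alpha> = map_prod (mat_P1 A) (mat_P1 B)"
  have "\<alpha> (gal_act L h pt) = gal_act L h (\<alpha> pt)" if "h \<in> Gal k" "pt \<in> QL_points" for h pt
    using assms(7) that map_prod_mat_P1_gal_act_commute[OF _ A(1) B(1) p(1,2) assms(8)] A(2) B(2)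
    unfolding \<alpha>_def by blast
  then have "\<alpha> \<in> Aut_QL k L"
    using map_prod_mat_P1_in_Aut_kbar[OF A(1) B(1)] unfolding Aut_QL_def \<alpha>_def by blast
  moreover have "\<forall>i\<in>{1, 2, 3::nat}. \<alpha> (p i) = q i"
    using A(2) B(2) by (simp add: \<alpha>_def map_prod_def case_prod_beta prod_eq_iff)
  ultimately show ?thesis by blast
qed

end
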